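(* Let $p,m,n\ge 1$ be integers, let $a_1,\dots,a_n\in\mathbb{C}$ be distinct, let $m_1,\dots,m_n\ge 1$ be integers, and let $C_0,\dots,C_{m-1}$ and $B_k^{(j)}$ ($1\le j\le n$, $1\le k\le m_j$) be complex $p\times p$ matrices. Consider the $p\times p$ rational matrix $$R(\lambda)=I\lambda^m-C_{m-1}\lambda^{m-1}-\cdots-C_1\lambda-C_0+\sum_{j=1}^{n}\sum_{k=1}^{m_j}\frac{B_k^{(j)}}{(\lambda-a_j)^k},$$ and let $\mathcal{C}_R$ be its associated block matrix (defined in the context). Then every eigenvalue of $R(\lambda)$ is an eigenvalue of $\mathcal{C}_R$.
   Context: A scalar $\lambda_0\in\mathbb{C}$ with $\lambda_0\notin\{a_1,\dots,a_n\}$ is an eigenvalue of $R(\lambda)$ if there is a nonzero $v\in\mathbb{C}^p$ with $R(\lambda_0)v=0$. Let $N=m+\sum_{j=1}^n \frac{m_j(m_j+1)}{2}$. The associated block matrix is the $pN\times pN$ matrix $$\mathcal{C}_R=\begin{bmatrix}\mathcal{A}_n&0&\cdots&0&-\mathcal{F}_n\\ 0&\mathcal{A}_{n-1}&\cdots&0&-\mathcal{F}_{n-1}\\ \vdots&&\ddots&&\vdots\\ 0&0&\cdots&\mathcal{A}_1&-\mathcal{F}_1\\ \mathcal{B}_n&\mathcal{B}_{n-1}&\cdots&\mathcal{B}_1&\mathcal{B}_0\end{bmatrix},$$ where, for $1\le j\le n$: $\mathcal{A}_j=\mathrm{diag}(\mathbf{A}^{(j)}_{m_j},\mathbf{A}^{(j)}_{m_j-1},\dots,\mathbf{A}^{(j)}_1)$,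 and $\mathbf{A}^{(j)}_k$ ($1\le k\le m_j$) is the $pk\times pk$ block matrix with $a_jI$ in each diagonal block, $I$ in each block of the block superdiagonal, and $0$ elsewhere; $\mathcal{F}_j$ is the block column $\begin{bmatrix}\mathbf{F}_{m_j}\\ \vdots\\ \mathbf{F}_1\end{bmatrix}$, where $\mathbf{F}_k$ is the $pk\times pm$ matrix, partitioned into $p\times p$ blocks, whose only nonzero block is $I$ in block position $(k,1)$ (last block row, first block column); $\mathcal{B}_j=\begin{bmatrix}\mathbf{B}^{(j)}_{m_j}&\mathbf{B}^{(j)}_{m_j-1}&\cdots&\mathbf{B}^{(j)}_1\end{bmatrix}$, where $\mathbf{B}^{(j)}_k$ is the $pm\times pk$ matrix, partitioned into $p\times p$ blocks, whose only nonzero block is $B^{(j)}_k$ in block position $(m,1)$; and $\mathcal{B}_0$ is the $pm\times pm$ block companion matrix with $I$ in each block of the block superdiagonal, last block row $\begin{bmatrix}C_0&C_1&\cdots&C_{m-1}\end{bmatrix}$, and $0$ elsewhere. *)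

theory Defs
  imports Complex_Main "Jordan_Normal_Form.Char_Poly"
begin

(* Indices: j ranges over {1..n}, k over {1..mj j}; C i for i < m; B j k is B^{(j)}_k. *)

definition grp_size :: "(nat \<Rightarrow> nat) \<Rightarrow> nat \<Rightarrow> nat" where
  "grp_size mj j = mj j * (mj j + 1) div 2"

(* number of p x p block rows/columns occupied by the A-part: sum_j m_j(m_j+1)/2 *)
definition A_blocks :: "nat \<Rightarrow> (nat \<Rightarrow> nat) \<Rightarrow> nat" where
  "A_blocks n mj = (\<Sum>j=1..n. grp_size mj j)"

definition N_blocks :: "nat \<Rightarrow> nat \<Rightarrow> (nat \<Rightarrow> nat) \<Rightarrow> nat" where
  "N_blocks m n mj = m + A_blocks n mj"

(* groups appear in the order A_n, A_{n-1}, ..., A_1 *)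
definition grp_off :: "nat \<Rightarrow> (nat \<Rightarrow> nat) \<Rightarrow> nat \<Rightarrow> nat" where
  "grp_off n mj j = (\<Sum>i\<in>{j<..n}. grp_size mj i)"

(* inside group j, sub-blocks A^{(j)}_{m_j}, ..., A^{(j)}_1 *)
definition sub_off :: "(nat \<Rightarrow> nat) \<Rightarrow> nat \<Rightarrow> nat \<Rightarrow> nat" where
  "sub_off mj j k = (\<Sum>l\<in>{k<..mj j}. l)"

(* block index of the (t+1)-th block row/column (t < k) of A^{(j)}_k *)
definition bpos :: "nat \<Rightarrow> (nat \<Rightarrow> nat) \<Rightarrow> nat \<times> nat \<times> nat \<Rightarrow> nat" where
  "bpos n mj x = (case x of (j, k, t) \<Rightarrow> grp_off n mj j + sub_off mj j k + t)"

definition valid_pos :: "nat \<Rightarrow> (nat \<Rightarrow> nat) \<Rightarrow> nat \<times> nat \<times> nat \<Rightarrow> bool" where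
  "valid_pos n mj x = (case x of (j, k, t) \<Rightarrow> 1 \<le> j \<and> j \<le> n \<and> 1 \<le> k \<and> k \<le> mj j \<and> t < k)"

definition decode :: "nat \<Rightarrow> (nat \<Rightarrow> nat) \<Rightarrow> nat \<Rightarrow> nat \<times> nat \<times> nat" where
  "decode n mj b = (THE x. valid_pos n mj x \<and> bpos n mj x = b)"

definition CR_block :: "nat \<Rightarrow> nat \<Rightarrow> nat \<Rightarrow> (nat \<Rightarrow> complex) \<Rightarrow> (nat \<Rightarrow> nat)
    \<Rightarrow> (nat \<Rightarrow> complex mat) \<Rightarrow> (nat \<Rightarrow> nat \<Rightarrow> complex mat) \<Rightarrow> nat \<Rightarrow> nat \<Rightarrow> complex mat" where
  "CR_block p m n a mj C B b b' =
    (let M = A_blocks n mj in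
     if b < M \<and> b' < M then
       (case decode n mj b of (j, k, t) \<Rightarrow>
        case decode n mj b' of (j', k', t') \<Rightarrow>
          if j = j' \<and> k = k' \<and> t' = t then a j \<cdot>\<^sub>m 1\<^sub>m p
          else if j = j' \<and> k = k' \<and> t' = t + 1 then 1\<^sub>m p
          else 0\<^sub>m p p)
     else if b < M then
       (case decode n mj b of (j, k, t) \<Rightarrow>
          if t + 1 = k \<and> b' = M then - 1\<^sub>m p else 0\<^sub>m p p)
     else if b' < M then
       (case decode n mj b' of (j, k, t) \<Rightarrow>
          if b = M + (m - 1) \<and> t = 0 then B j k else 0\<^sub>m p p)
     else
       (let s = b - M; s' = b' - M in
          if s' = s + 1 then 1\<^sub>m p
          else if s = m - 1 then C s'
          else 0\<^sub>m p p))"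

definition CR :: "nat \<Rightarrow> nat \<Rightarrow> nat \<Rightarrow> (nat \<Rightarrow> complex) \<Rightarrow> (nat \<Rightarrow> nat)
    \<Rightarrow> (nat \<Rightarrow> complex mat) \<Rightarrow> (nat \<Rightarrow> nat \<Rightarrow> complex mat) \<Rightarrow> complex mat" where
  "CR p m n a mj C B =
    (let N = N_blocks m n mj in
     mat (p * N) (p * N)
       (\<lambda>(i, i'). CR_block p m n a mj C B (i div p) (i' div p) $$ (i mod p, i' mod p)))"

definition R_mat :: "nat \<Rightarrow> nat \<Rightarrow> nat \<Rightarrow> (nat \<Rightarrow> complex) \<Rightarrow> (nat \<Rightarrow> nat)
    \<Rightarrow> (nat \<Rightarrow> complex mat) \<Rightarrow> (nat \<Rightarrow> nat \<Rightarrow> complex mat) \<Rightarrow> complex \<Rightarrow> complex mat" where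
  "R_mat p m n a mj C B lam =
     mat p p (\<lambda>(r, c). (if r = c then lam ^ m else 0)
        - (\<Sum>i<m. lam ^ i * C i $$ (r, c))
        + (\<Sum>j=1..n. \<Sum>k=1..mj j. B j k $$ (r, c) / (lam - a j) ^ k))"

definition R_eigenvalue :: "nat \<Rightarrow> nat \<Rightarrow> nat \<Rightarrow> (nat \<Rightarrow> complex) \<Rightarrow> (nat \<Rightarrow> nat)
    \<Rightarrow> (nat \<Rightarrow> complex mat) \<Rightarrow> (nat \<Rightarrow> nat \<Rightarrow> complex mat) \<Rightarrow> complex \<Rightarrow> bool" where
  "R_eigenvalue p m n a mj C B lam0 =
     (lam0 \<notin> a ` {1..n} \<and>
      (\<exists>v. v \<in> carrier_vec p \<and> v \<noteq> 0\<^sub>v p \<and> R_mat p m n a mj C B lam0 *\<^sub>v v = 0\<^sub>v p))"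

end

theory Submission
  imports Defs
begin

(*
  If R(lam0) v = 0 with v <> 0, put x_(j,k,t) = -v / (lam0 - a_j)^(k - t) in the block
  position of row t + 1 of A^(j)_k, and x_s = lam0^s v in the s-th block of the companion
  part (s < m).  Then C_R x = lam0 x, read block row by block row: in A^(j)_k it is
  a_j/(lam0 - a_j)^e + 1/(lam0 - a_j)^(e-1) = lam0/(lam0 - a_j)^e, the last row of A^(j)_k
  meets the -I of F_j at x_0 = v; the companion rows are the shift lam0^(s+1) = lam0 lam0^s;
  and the last row says lam0^m v = sum_i lam0^i C_i v - sum_(j,k) B^(j)_k v / (lam0 - a_j)^k,
  which is R(lam0) v = 0.  As x_0 = v <> 0, lam0 is an eigenvalue of C_R.
*)

section \<open>Consecutive intervals of given lengths\<close>

(* Intervals of lengths s 1, ..., s hi placed in the order hi, ..., 1 starting at 0: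
   interval i is [sum s {i<..hi}, sum s {i<..hi} + s i).  This is how grp_off and sub_off
   lay out the blocks of C_R. *)
lemma sum_greaterThanAtMost_pred:
  fixes s :: "nat \<Rightarrow> nat"
  assumes "1 \<le> i" "i \<le> hi"
  shows "sum s {i-1<..hi} = s i + sum s {i<..hi}"
proof -
  have "{i-1<..hi} = insert i {i<..hi}" using assms by auto
  then show ?thesis by simp
qed

lemma sum_greaterThanAtMost_antimono:
  fixes s :: "nat \<Rightarrow> nat"
  assumes "i \<le> i'"
  shows "sum s {i'<..hi} \<le> sum s {i<..hi}"
  by (rule sum_mono2) (use assms in auto)

lemma offset_add_less_sum:
  fixes s :: "nat \<Rightarrow> nat"
  assumes "1 \<le> i" "i \<le> hi" "u < s i"
  shows "sum s {i<..hi} + u < sum s {0<..hi}"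
proof -
  have "sum s {i<..hi} + u < sum s {i-1<..hi}"
    using sum_greaterThanAtMost_pred[OF assms(1,2)] assms(3) by simp
  also have "\<dots> \<le> sum s {0<..hi}" by (rule sum_greaterThanAtMost_antimono) simp
  finally show ?thesis .
qed

lemma offset_add_eq_imp_eq:
  fixes s :: "nat \<Rightarrow> nat"
  assumes "1 \<le> i" "i \<le> hi" "1 \<le> i'" "i' \<le> hi" "u < s i" "u' < s i'"
    and eq: "sum s {i<..hi} + u = sum s {i'<..hi} + u'"
  shows "i = i'"
proof -
  have less: "sum s {l<..hi} + w < sum s {l'<..hi}"
    if "1 \<le> l" "l \<le> hi" "w < s l" "l' < l" for l l' w
  proof -
    have "sum s {l<..hi} + w < sum s {l-1<..hi}"
      using sum_greaterThanAtMost_pred[of l hi s] that by simp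
    also have "\<dots> \<le> sum s {l'<..hi}" by (rule sum_greaterThanAtMost_antimono) (use that in simp)
    finally show ?thesis .
  qed
  show ?thesis
    using less[where l = i' and l' = i and w = u'] less[where l = i and l' = i' and w = u] assms
    by (cases i i' rule: linorder_cases) (auto simp: eq)
qed

lemma ex_offset_interval:
  fixes s :: "nat \<Rightarrow> nat"
  assumes "b < sum s {0<..hi}"
  shows "\<exists>i. 1 \<le> i \<and> i \<le> hi \<and> sum s {i<..hi} \<le> b \<and> b < sum s {i<..hi} + s i"
proof -
  define i where "i = (LEAST i. sum s {i<..hi} \<le> b)"
  have "sum s {hi<..hi} \<le> b" by simp
  then have le: "sum s {i<..hi} \<le> b" and "i \<le> hi"
    unfolding i_def by (rule LeastI, rule Least_le)
  moreover have "i \<noteq> 0" using le assms by (metis not_less)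
  moreover have "\<not> sum s {i-1<..hi} \<le> b"
    unfolding i_def by (rule not_less_Least) (use \<open>i \<noteq> 0\<close> in \<open>simp add: i_def[symmetric]\<close>)
  ultimately show ?thesis
    using sum_greaterThanAtMost_pred[of i hi s] by (intro exI[of _ i]) auto
qed

section \<open>Block positions of the A-part\<close>

lemma A_blocks_eq_sum: "A_blocks n mj = sum (grp_size mj) {0<..n}"
  unfolding A_blocks_def by (simp add: atLeastSucAtMost_greaterThanAtMost[symmetric])

lemma grp_size_eq_sum: "grp_size mj j = sum (\<lambda>l. l) {0<..mj j}"
proof -
  have "sum (\<lambda>l. l) {0<..mj j} = sum (\<lambda>l. l) {0..mj j}"
    by (simp add: atLeast0AtMost[symmetric] atLeastSucAtMost_greaterThanAtMost[symmetric]
        sum.atLeast_Suc_atMost)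
  then show ?thesis unfolding grp_size_def using gauss_sum_nat[of "mj j"] by simp
qed

lemma bpos_eq: "bpos n mj (j, k, t) = sum (grp_size mj) {j<..n} + (sum (\<lambda>l. l) {k<..mj j} + t)"
  by (simp add: bpos_def grp_off_def sub_off_def)

lemma bpos_less_A_blocks:
  assumes "valid_pos n mj x"
  shows "bpos n mj x < A_blocks n mj"
proof -
  obtain j k t where x: "x = (j, k, t)" and v: "1 \<le> j" "j \<le> n" "1 \<le> k" "k \<le> mj j" "t < k"
    using assms by (cases x) (auto simp: valid_pos_def)
  have "sum (\<lambda>l. l) {k<..mj j} + t < grp_size mj j"
    using offset_add_less_sum[of k "mj j" t "\<lambda>l. l"] v by (simp add: grp_size_eq_sum)
  then show ?thesis
    using offset_add_less_sum[of j n _ "grp_size mj"] v by (simp add: x bpos_eq A_blocks_eq_sum)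
qed

lemma bpos_inj:
  assumes "valid_pos n mj x" "valid_pos n mj y" "bpos n mj x = bpos n mj y"
  shows "x = y"
proof -
  obtain j k t where x: "x = (j, k, t)" and v: "1 \<le> j" "j \<le> n" "1 \<le> k" "k \<le> mj j" "t < k"
    using assms(1) by (cases x) (auto simp: valid_pos_def)
  obtain j' k' t' where y: "y = (j', k', t')"
    and v': "1 \<le> j'" "j' \<le> n" "1 \<le> k'" "k' \<le> mj j'" "t' < k'"
    using assms(2) by (cases y) (auto simp: valid_pos_def)
  have inner: "sum (\<lambda>l. l) {k<..mj j} + t < grp_size mj j"
    "sum (\<lambda>l. l) {k'<..mj j'} + t' < grp_size mj j'"
    using offset_add_less_sum[of k "mj j" t "\<lambda>l. l"]
      offset_add_less_sum[of k' "mj j'" t' "\<lambda>l. l"] v v'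
    by (simp_all add: grp_size_eq_sum)
  have "j = j'"
    using offset_add_eq_imp_eq[OF v(1,2) v'(1,2) inner] assms(3) by (simp add: x y bpos_eq)
  moreover from this have "k = k'"
    using offset_add_eq_imp_eq[OF v(3,4), where i' = k' and u = t and u' = t' and s = "\<lambda>l. l"]
      v v' assms(3)
    by (simp add: x y bpos_eq)
  ultimately show ?thesis using assms(3) by (simp add: x y bpos_eq)
qed

lemma bpos_surj:
  assumes "b < A_blocks n mj"
  shows "\<exists>x. valid_pos n mj x \<and> bpos n mj x = b"
proof -
  obtain j where j: "1 \<le> j" "j \<le> n" "sum (grp_size mj) {j<..n} \<le> b"
    "b < sum (grp_size mj) {j<..n} + grp_size mj j"
    using ex_offset_interval[of b "grp_size mj" n] assms by (auto simp: A_blocks_eq_sum)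
  define u where "u = b - sum (grp_size mj) {j<..n}"
  have "u < sum (\<lambda>l. l) {0<..mj j}" using j by (simp add: u_def grp_size_eq_sum)
  then obtain k where k: "1 \<le> k" "k \<le> mj j" "sum (\<lambda>l. l) {k<..mj j} \<le> u"
    "u < sum (\<lambda>l. l) {k<..mj j} + k"
    using ex_offset_interval by blast
  define t where "t = u - sum (\<lambda>l. l) {k<..mj j}"
  have "valid_pos n mj (j, k, t) \<and> bpos n mj (j, k, t) = b"
    using j k by (auto simp: valid_pos_def bpos_eq t_def u_def)
  then show ?thesis by blast
qed

lemma bij_betw_bpos: "bij_betw (bpos n mj) {x. valid_pos n mj x} {..<A_blocks n mj}"
  unfolding bij_betw_def inj_on_def using bpos_inj bpos_less_A_blocks bpos_surj by fastforce

lemma decode_bpos: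
  assumes "valid_pos n mj x"
  shows "decode n mj (bpos n mj x) = x"
  unfolding decode_def using assms bpos_inj by (intro the_equality) blast+

lemma valid_pos_decode:
  assumes "b < A_blocks n mj"
  shows "valid_pos n mj (decode n mj b)"
  using bpos_surj[OF assms] decode_bpos by metis

lemma bpos_decode:
  assumes "b < A_blocks n mj"
  shows "bpos n mj (decode n mj b) = b"
  using bpos_surj[OF assms] decode_bpos by metis

lemma decode_eq_iff:
  assumes "b < A_blocks n mj" "valid_pos n mj x"
  shows "decode n mj b = x \<longleftrightarrow> b = bpos n mj x"
  using assms bpos_decode decode_bpos by metis

lemma sum_decode_first_blocks:
  "(\<Sum>b<A_blocks n mj. case decode n mj b of (j, k, t) \<Rightarrow> if t = 0 then F j k else 0)
    = (\<Sum>j=1..n. \<Sum>k=1..mj j. (F j k :: 'a::comm_monoid_add))"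
proof -
  define V where "V = {x. valid_pos n mj x}"
  define G where "G = (\<lambda>(j, k, t). if t = (0::nat) then F j k else 0)"
  have bij: "bij_betw (bpos n mj) V {..<A_blocks n mj}"
    unfolding V_def by (rule bij_betw_bpos)
  then have "finite V" using bij_betw_finite by blast
  have "(\<Sum>b<A_blocks n mj. G (decode n mj b)) = (\<Sum>x\<in>V. G (decode n mj (bpos n mj x)))"
    using sum.reindex_bij_betw[OF bij, of "\<lambda>b. G (decode n mj b)"] by simp
  also have "\<dots> = (\<Sum>x\<in>V. G x)" using decode_bpos unfolding V_def by (intro sum.cong) auto
  also have "\<dots> = (\<Sum>x\<in>(\<lambda>(j, k). (j, k, 0::nat)) ` (SIGMA j:{1..n}. {1..mj j}). G x)"
    using \<open>finite V\<close>
    by (intro sum.mono_neutral_right) (auto simp: V_def G_def valid_pos_def image_iff)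
  also have "\<dots> = (\<Sum>(j, k)\<in>(SIGMA j:{1..n}. {1..mj j}). F j k)"
    by (subst sum.reindex) (auto simp: inj_on_def G_def intro!: sum.cong)
  also have "\<dots> = (\<Sum>j=1..n. \<Sum>k=1..mj j. F j k)" by (simp add: sum.Sigma)
  finally show ?thesis by (simp add: G_def)
qed

section \<open>Block matrices\<close>

lemma sum_lessThan_add:
  fixes f :: "nat \<Rightarrow> 'a::comm_monoid_add"
  shows "(\<Sum>i<a + b. f i) = (\<Sum>i<a. f i) + (\<Sum>i<b. f (a + i))"
  by (induction b) (simp_all add: add.assoc)

lemma sum_lessThan_mult_div_mod:
  fixes f :: "nat \<Rightarrow> nat \<Rightarrow> 'a::comm_monoid_add"
  assumes "0 < p"
  shows "(\<Sum>i<p * N. f (i div p) (i mod p)) = (\<Sum>b<N. \<Sum>c<p. f b c)"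
proof (induction N)
  case 0
  then show ?case by simp
next
  case (Suc N)
  have "(\<Sum>i<p * N + p. f (i div p) (i mod p))
      = (\<Sum>i<p * N. f (i div p) (i mod p)) + (\<Sum>c<p. f ((p * N + c) div p) ((p * N + c) mod p))"
    by (rule sum_lessThan_add)
  also have "(\<Sum>c<p. f ((p * N + c) div p) ((p * N + c) mod p)) = (\<Sum>c<p. f N c)"
    using assms by (intro sum.cong) auto
  finally show ?case using Suc by (simp add: add.commute)
qed

lemma sum_lessThan_mult_of_bool_eq:
  fixes f :: "nat \<Rightarrow> 'a::semiring_1"
  assumes "j < N"
  shows "(\<Sum>i<N. f i * of_bool (i = j)) = f j"
proof -
  have "{..<N} \<inter> {i. i = j} = {j}" using assms by auto
  then show ?thesis by simp
qed

lemma mult_mat_vec_blockwise: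
  fixes K :: "nat \<Rightarrow> nat \<Rightarrow> 'a::comm_semiring_1 mat"
  assumes p: "0 < p" and i: "i < p * N" and v: "v \<in> carrier_vec p"
    and K: "\<And>b'. b' < N \<Longrightarrow> K (i div p) b' \<in> carrier_mat p p"
  shows "(mat (p * N) (p * N) (\<lambda>(i, i'). K (i div p) (i' div p) $$ (i mod p, i' mod p))
      *\<^sub>v vec (p * N) (\<lambda>i'. w (i' div p) * v $ (i' mod p))) $ i
    = (\<Sum>b'<N. w b' * (K (i div p) b' *\<^sub>v v) $ (i mod p))"
proof -
  have "(mat (p * N) (p * N) (\<lambda>(i, i'). K (i div p) (i' div p) $$ (i mod p, i' mod p))
      *\<^sub>v vec (p * N) (\<lambda>i'. w (i' div p) * v $ (i' mod p))) $ i
    = (\<Sum>i'<p * N. K (i div p) (i' div p) $$ (i mod p, i' mod p) * (w (i' div p) * v $ (i' mod p)))"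
    using i by (simp add: scalar_prod_def lessThan_atLeast0)
  also have "\<dots> = (\<Sum>b'<N. \<Sum>c<p. K (i div p) b' $$ (i mod p, c) * (w b' * v $ c))"
    by (rule sum_lessThan_mult_div_mod[OF p])
  also have "\<dots> = (\<Sum>b'<N. w b' * (K (i div p) b' *\<^sub>v v) $ (i mod p))"
  proof (rule sum.cong)
    fix b' assume "b' \<in> {..<N}"
    then have "K (i div p) b' \<in> carrier_mat p p" using K by simp
    then have "(K (i div p) b' *\<^sub>v v) $ (i mod p) = (\<Sum>c<p. K (i div p) b' $$ (i mod p, c) * v $ c)"
      using v p by (simp add: scalar_prod_def lessThan_atLeast0)
    then show "(\<Sum>c<p. K (i div p) b' $$ (i mod p, c) * (w b' * v $ c))
        = w b' * (K (i div p) b' *\<^sub>v v) $ (i mod p)"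
      by (simp add: sum_distrib_left ac_simps)
  qed simp
  finally show ?thesis .
qed

lemma R_mat_mult_vec_index:
  assumes C: "\<forall>i<m. C i \<in> carrier_mat p p"
    and B: "\<forall>j\<in>{1..n}. \<forall>k\<in>{1..mj j}. B j k \<in> carrier_mat p p"
    and v: "v \<in> carrier_vec p" and r: "r < p"
  shows "(R_mat p m n a mj C B lam *\<^sub>v v) $ r = lam ^ m * v $ r
      - (\<Sum>i<m. lam ^ i * (C i *\<^sub>v v) $ r)
      + (\<Sum>j=1..n. \<Sum>k=1..mj j. (B j k *\<^sub>v v) $ r / (lam - a j) ^ k)"
proof -
  have row: "(M *\<^sub>v v) $ r = (\<Sum>c<p. M $$ (r, c) * v $ c)" if "M \<in> carrier_mat p p" for M
    using that v r by (simp add: scalar_prod_def lessThan_atLeast0)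
  have "(R_mat p m n a mj C B lam *\<^sub>v v) $ r = (\<Sum>c<p. R_mat p m n a mj C B lam $$ (r, c) * v $ c)"
    by (rule row) (simp add: R_mat_def)
  also have "\<dots> = (\<Sum>c<p. (if r = c then lam ^ m * v $ c else 0)
          - (\<Sum>i<m. lam ^ i * C i $$ (r, c) * v $ c)
          + (\<Sum>j=1..n. \<Sum>k=1..mj j. B j k $$ (r, c) / (lam - a j) ^ k * v $ c))"
    using r by (intro sum.cong) (auto simp: R_mat_def ring_distribs sum_distrib_right)
  also have "\<dots> = lam ^ m * v $ r
      - (\<Sum>i<m. lam ^ i * (\<Sum>c<p. C i $$ (r, c) * v $ c))
      + (\<Sum>j=1..n. \<Sum>k=1..mj j. (\<Sum>c<p. B j k $$ (r, c) * v $ c) / (lam - a j) ^ k)"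
    using r by (simp add: sum.distrib sum_subtractf sum_distrib_left sum_divide_distrib
        sum.swap[where A = "{..<p}"] mult.assoc times_divide_eq_left)
  also have "\<dots> = lam ^ m * v $ r
      - (\<Sum>i<m. lam ^ i * (C i *\<^sub>v v) $ r)
      + (\<Sum>j=1..n. \<Sum>k=1..mj j. (B j k *\<^sub>v v) $ r / (lam - a j) ^ k)"
    using C B by (simp add: row)
  finally show ?thesis .
qed

section \<open>The eigenvector of the block matrix\<close>

definition CR_weight :: "nat \<Rightarrow> (nat \<Rightarrow> complex) \<Rightarrow> (nat \<Rightarrow> nat) \<Rightarrow> complex
    \<Rightarrow> nat \<Rightarrow> complex" where
  "CR_weight n a mj lam b =
    (if b < A_blocks n mj then (case decode n mj b of (j, k, t) \<Rightarrow> - 1 / (lam - a j) ^ (k - t))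
     else lam ^ (b - A_blocks n mj))"

definition CR_eigvec :: "nat \<Rightarrow> nat \<Rightarrow> nat \<Rightarrow> (nat \<Rightarrow> complex) \<Rightarrow> (nat \<Rightarrow> nat) \<Rightarrow> complex
    \<Rightarrow> complex vec \<Rightarrow> complex vec" where
  "CR_eigvec p m n a mj lam v =
    vec (p * N_blocks m n mj) (\<lambda>i. CR_weight n a mj lam (i div p) * v $ (i mod p))"

lemma CR_weight_A_recurrence:
  assumes b: "b < A_blocks n mj" and d: "decode n mj b = (j, k, t)" and lam: "lam \<notin> a ` {1..n}"
  shows "a j * CR_weight n a mj lam b
      + (if t + 1 < k then CR_weight n a mj lam (bpos n mj (j, k, t + 1))
         else - CR_weight n a mj lam (A_blocks n mj))
    = lam * CR_weight n a mj lam b"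
proof -
  have v: "valid_pos n mj (j, k, t)" using valid_pos_decode[OF b] d by simp
  then have nz: "lam - a j \<noteq> 0" using lam by (auto simp: valid_pos_def)
  have w: "CR_weight n a mj lam b = - 1 / (lam - a j) ^ (k - t)" using b d by (simp add: CR_weight_def)
  show ?thesis
  proof (cases "t + 1 < k")
    case True
    then have "valid_pos n mj (j, k, t + 1)" using v by (simp add: valid_pos_def)
    then have w2: "CR_weight n a mj lam (bpos n mj (j, k, t + 1)) = - 1 / (lam - a j) ^ (k - t - 1)"
      using bpos_less_A_blocks decode_bpos by (simp add: CR_weight_def)
    have w1: "CR_weight n a mj lam b = - 1 / ((lam - a j) * (lam - a j) ^ (k - t - 1))"
      using w True by (simp flip: power_Suc add: Suc_diff_Suc)
    have "a j * (- 1 / ((lam - a j) * (lam - a j) ^ (k - t - 1))) + - 1 / (lam - a j) ^ (k - t - 1)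
        = lam * (- 1 / ((lam - a j) * (lam - a j) ^ (k - t - 1)))"
      using nz by (simp add: field_simps)
    then show ?thesis using True by (simp only: w1 w2 if_True)
  next
    case False
    then have "k - t = 1" using v unfolding valid_pos_def by auto
    then show ?thesis using False w nz by (simp add: CR_weight_def field_simps)
  qed
qed

lemma CR_block_carrier:
  assumes C: "\<forall>i<m. C i \<in> carrier_mat p p"
    and B: "\<forall>j\<in>{1..n}. \<forall>k\<in>{1..mj j}. B j k \<in> carrier_mat p p"
    and b': "b' < N_blocks m n mj"
  shows "CR_block p m n a mj C B b b' \<in> carrier_mat p p"
  using valid_pos_decode[of b' n mj] assms
  by (auto simp: CR_block_def Let_def N_blocks_def valid_pos_def split: prod.split)

lemma CR_block_A_row:
  assumes b: "b < A_blocks n mj" and d: "decode n mj b = (j, k, t)"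
  shows "CR_block p m n a mj C B b b' =
    (if b' = b then a j \<cdot>\<^sub>m 1\<^sub>m p
     else if t + 1 < k \<and> b' = bpos n mj (j, k, t + 1) then 1\<^sub>m p
     else if t + 1 = k \<and> b' = A_blocks n mj then - 1\<^sub>m p
     else 0\<^sub>m p p)"
proof (cases "b' < A_blocks n mj")
  case True
  obtain j' k' t' where d': "decode n mj b' = (j', k', t')" by (cases "decode n mj b'")
  have valid: "valid_pos n mj (j, k, t)" "valid_pos n mj (j', k', t')"
    using valid_pos_decode b True d d' by metis+
  have same: "(j = j' \<and> k = k' \<and> t' = t) \<longleftrightarrow> b' = b"
    using decode_eq_iff[OF True valid(1)] d' bpos_decode[OF b] d by auto
  have succ: "(j = j' \<and> k = k' \<and> t' = t + 1) \<longleftrightarrow> (t + 1 < k \<and> b' = bpos n mj (j, k, t + 1))"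
  proof (cases "t + 1 < k")
    case succ: True
    then have "valid_pos n mj (j, k, t + 1)" using valid(1) by (simp add: valid_pos_def)
    from decode_eq_iff[OF True this] show ?thesis using succ d' by auto
  next
    case False
    then show ?thesis using valid(2) by (auto simp: valid_pos_def)
  qed
  have "CR_block p m n a mj C B b b' =
    (if j = j' \<and> k = k' \<and> t' = t then a j \<cdot>\<^sub>m 1\<^sub>m p
     else if j = j' \<and> k = k' \<and> t' = t + 1 then 1\<^sub>m p else 0\<^sub>m p p)"
    using b True by (simp add: CR_block_def d d')
  from this[unfolded same succ] show ?thesis using True by simp
next
  case False
  have "valid_pos n mj (j, k, t)" using valid_pos_decode[OF b] d by simp
  then have "t + 1 < k \<Longrightarrow> bpos n mj (j, k, t + 1) < A_blocks n mj"
    using bpos_less_A_blocks by (simp add: valid_pos_def)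
  then show ?thesis using b False by (auto simp: CR_block_def d)
qed

lemma CR_A_row_eigen:
  assumes b: "b < A_blocks n mj" and lam: "lam \<notin> a ` {1..n}" and m: "1 \<le> m"
    and v: "v \<in> carrier_vec p" and r: "r < p"
  shows "(\<Sum>b'<N_blocks m n mj. CR_weight n a mj lam b' * (CR_block p m n a mj C B b b' *\<^sub>v v) $ r)
    = lam * CR_weight n a mj lam b * v $ r"
proof -
  obtain j k t where d: "decode n mj b = (j, k, t)" by (cases "decode n mj b")
  let ?w = "CR_weight n a mj lam"
  define b2 where "b2 = bpos n mj (j, k, t + 1)"
  have valid: "valid_pos n mj (j, k, t)" using valid_pos_decode[OF b] d by simp
  then have b2: "t + 1 < k \<Longrightarrow> b2 < A_blocks n mj"
    using bpos_less_A_blocks by (simp add: b2_def valid_pos_def)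
  have b2_ne: "t + 1 < k \<Longrightarrow> b2 \<noteq> b"
    using valid d decode_bpos[of n mj "(j, k, t + 1)"] by (auto simp: b2_def valid_pos_def)
  let ?c = "\<lambda>b'. a j * of_bool (b' = b) + of_bool (t + 1 < k \<and> b' = b2)
      - of_bool (t + 1 = k \<and> b' = A_blocks n mj)"
  have "(\<Sum>b'<N_blocks m n mj. ?w b' * (CR_block p m n a mj C B b b' *\<^sub>v v) $ r)
      = (\<Sum>b'<N_blocks m n mj. ?w b' * ?c b' * v $ r)"
    using v r b b2 b2_ne by (intro sum.cong) (auto simp: CR_block_A_row[OF b d, folded b2_def])
  also have "\<dots> = (\<Sum>b'<N_blocks m n mj. ?w b' * ?c b') * v $ r"
    by (rule sum_distrib_right[symmetric])
  also have "(\<Sum>b'<N_blocks m n mj. ?w b' * ?c b')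
      = a j * ?w b + (if t + 1 < k then ?w (bpos n mj (j, k, t + 1)) else - ?w (A_blocks n mj))"
  proof -
    have "b < N_blocks m n mj" "t + 1 < k \<Longrightarrow> b2 < N_blocks m n mj"
      "A_blocks n mj < N_blocks m n mj" "t + 1 = k \<longleftrightarrow> \<not> t + 1 < k"
      using b b2 m valid by (auto simp: N_blocks_def valid_pos_def)
    then show ?thesis
      by (simp add: b2_def distrib_left right_diff_distrib sum.distrib sum_subtractf
          mult.assoc[symmetric] sum_distrib_right[symmetric] sum_lessThan_mult_of_bool_eq)
  qed
  also have "\<dots> = lam * ?w b" by (rule CR_weight_A_recurrence[OF b d lam])
  finally show ?thesis .
qed

lemma CR_shift_row_eigen:
  assumes b: "A_blocks n mj \<le> b" "b + 1 < N_blocks m n mj"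
    and v: "v \<in> carrier_vec p" and r: "r < p"
  shows "(\<Sum>b'<N_blocks m n mj. CR_weight n a mj lam b' * (CR_block p m n a mj C B b b' *\<^sub>v v) $ r)
    = lam * CR_weight n a mj lam b * v $ r"
proof -
  have blk: "CR_block p m n a mj C B b b' = (if b' = b + 1 then 1\<^sub>m p else 0\<^sub>m p p)" for b'
  proof (cases "b' < A_blocks n mj")
    case True
    have "b \<noteq> A_blocks n mj + (m - 1)" using b unfolding N_blocks_def by linarith
    then show ?thesis
      using b True by (cases "decode n mj b'") (simp add: CR_block_def)
  next
    case False
    moreover have "b' - A_blocks n mj = b - A_blocks n mj + 1 \<longleftrightarrow> b' = b + 1"
      "b - A_blocks n mj \<noteq> m - 1"
      using b False unfolding N_blocks_def by linarith+
    ultimately show ?thesis using b by (simp add: CR_block_def Let_def)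
  qed
  have "(\<Sum>b'<N_blocks m n mj. CR_weight n a mj lam b' * (CR_block p m n a mj C B b b' *\<^sub>v v) $ r)
      = (\<Sum>b'<N_blocks m n mj. if b' = b + 1 then CR_weight n a mj lam b' * v $ r else 0)"
    using v r by (intro sum.cong) (simp_all add: blk)
  also have "\<dots> = CR_weight n a mj lam (b + 1) * v $ r"
    using b by simp
  also have "CR_weight n a mj lam (b + 1) = lam * CR_weight n a mj lam b"
    using b by (simp add: CR_weight_def Suc_diff_le)
  finally show ?thesis .
qed

lemma CR_last_row_A_part:
  assumes v: "v \<in> carrier_vec p" and r: "r < p"
  shows "(\<Sum>b'<A_blocks n mj. CR_weight n a mj lam b'
        * (CR_block p m n a mj C B (A_blocks n mj + (m - 1)) b' *\<^sub>v v) $ r)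
    = (\<Sum>j=1..n. \<Sum>k=1..mj j. - ((B j k *\<^sub>v v) $ r / (lam - a j) ^ k))"
proof -
  have "CR_weight n a mj lam b' * (CR_block p m n a mj C B (A_blocks n mj + (m - 1)) b' *\<^sub>v v) $ r
      = (case decode n mj b' of (j, k, t) \<Rightarrow>
          if t = 0 then - ((B j k *\<^sub>v v) $ r / (lam - a j) ^ k) else 0)"
    if "b' < A_blocks n mj" for b'
  proof -
    obtain j k t where d: "decode n mj b' = (j, k, t)" by (cases "decode n mj b'")
    have "CR_block p m n a mj C B (A_blocks n mj + (m - 1)) b' = (if t = 0 then B j k else 0\<^sub>m p p)"
      using that by (simp add: CR_block_def Let_def d)
    moreover have "CR_weight n a mj lam b' = - 1 / (lam - a j) ^ (k - t)"
      using that by (simp add: CR_weight_def d)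
    ultimately show ?thesis using v r by (simp add: d)
  qed
  then show ?thesis by (simp add: sum_decode_first_blocks)
qed

lemma CR_last_row_companion_part:
  assumes m: "1 \<le> m"
  shows "(\<Sum>s<m. CR_weight n a mj lam (A_blocks n mj + s)
        * (CR_block p m n a mj C B (A_blocks n mj + (m - 1)) (A_blocks n mj + s) *\<^sub>v v) $ r)
    = (\<Sum>i<m. lam ^ i * (C i *\<^sub>v v) $ r)"
proof -
  have "CR_block p m n a mj C B (A_blocks n mj + (m - 1)) (A_blocks n mj + s) = C s" if "s < m" for s
    using that m by (auto simp: CR_block_def Let_def)
  then show ?thesis by (simp add: CR_weight_def)
qed

lemma CR_last_row_eigen:
  assumes m: "1 \<le> m"
    and C: "\<forall>i<m. C i \<in> carrier_mat p p"
    and B: "\<forall>j\<in>{1..n}. \<forall>k\<in>{1..mj j}. B j k \<in> carrier_mat p p"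
    and Rv: "R_mat p m n a mj C B lam *\<^sub>v v = 0\<^sub>v p" and v: "v \<in> carrier_vec p" and r: "r < p"
  defines "b \<equiv> A_blocks n mj + (m - 1)"
  shows "(\<Sum>b'<N_blocks m n mj. CR_weight n a mj lam b' * (CR_block p m n a mj C B b b' *\<^sub>v v) $ r)
    = lam * CR_weight n a mj lam b * v $ r"
proof -
  have rearrange: "- Z + Y = X" if "X - Y + Z = 0" for X Y Z :: complex
    using that by (simp add: algebra_simps)
  have "(\<Sum>b'<N_blocks m n mj. CR_weight n a mj lam b' * (CR_block p m n a mj C B b b' *\<^sub>v v) $ r)
      = (\<Sum>j=1..n. \<Sum>k=1..mj j. - ((B j k *\<^sub>v v) $ r / (lam - a j) ^ k))
        + (\<Sum>i<m. lam ^ i * (C i *\<^sub>v v) $ r)"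
    unfolding b_def N_blocks_def add.commute[of m] sum_lessThan_add
    using CR_last_row_A_part[OF v r] CR_last_row_companion_part[OF m] by simp
  also have "\<dots> = lam ^ m * v $ r"
    unfolding sum_negf
    by (rule rearrange) (use R_mat_mult_vec_index[OF C B v r, of a lam] Rv r in simp)
  also have "\<dots> = lam * CR_weight n a mj lam b * v $ r"
    using m by (cases m) (simp_all add: CR_weight_def b_def)
  finally show ?thesis .
qed

lemma CR_eigvec_nonzero:
  assumes m: "1 \<le> m" and v: "v \<in> carrier_vec p" "v \<noteq> 0\<^sub>v p"
  shows "CR_eigvec p m n a mj lam v \<noteq> 0\<^sub>v (p * N_blocks m n mj)"
proof -
  have "\<exists>r<p. v $ r \<noteq> 0"
  proof (rule ccontr)
    assume "\<not> (\<exists>r<p. v $ r \<noteq> 0)"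
    then have "v = 0\<^sub>v p" using v(1) by (intro eq_vecI) auto
    with v(2) show False by simp
  qed
  then obtain r where r: "r < p" "v $ r \<noteq> 0" by blast
  have "r < p * m" using r m by (simp add: less_le_trans)
  then have idx: "p * A_blocks n mj + r < p * N_blocks m n mj"
    by (simp add: N_blocks_def distrib_left)
  then have "CR_eigvec p m n a mj lam v $ (p * A_blocks n mj + r) = v $ r"
    using r by (simp add: CR_eigvec_def CR_weight_def)
  then show ?thesis using r(2) idx by (metis index_zero_vec(1))
qed

lemma CR_mult_eigvec:
  assumes p: "0 < p" and m: "1 \<le> m"
    and C: "\<forall>i<m. C i \<in> carrier_mat p p"
    and B: "\<forall>j\<in>{1..n}. \<forall>k\<in>{1..mj j}. B j k \<in> carrier_mat p p"
    and lam: "lam \<notin> a ` {1..n}"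
    and Rv: "R_mat p m n a mj C B lam *\<^sub>v v = 0\<^sub>v p" and v: "v \<in> carrier_vec p"
  defines "x \<equiv> CR_eigvec p m n a mj lam v"
  shows "CR p m n a mj C B *\<^sub>v x = lam \<cdot>\<^sub>v x"
proof (rule eq_vecI)
  show "dim_vec (CR p m n a mj C B *\<^sub>v x) = dim_vec (lam \<cdot>\<^sub>v x)"
    by (simp add: CR_def Let_def x_def CR_eigvec_def)
next
  fix i assume "i < dim_vec (lam \<cdot>\<^sub>v x)"
  then have i: "i < p * N_blocks m n mj" by (simp add: x_def CR_eigvec_def)
  define b where "b = i div p"
  have r: "i mod p < p" using p by simp
  have b: "b < N_blocks m n mj" using i p by (simp add: b_def less_mult_imp_div_less mult.commute)
  have "(CR p m n a mj C B *\<^sub>v x) $ i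
      = (\<Sum>b'<N_blocks m n mj. CR_weight n a mj lam b' * (CR_block p m n a mj C B b b' *\<^sub>v v) $ (i mod p))"
    unfolding CR_def Let_def x_def CR_eigvec_def b_def
    by (rule mult_mat_vec_blockwise[OF p i v]) (rule CR_block_carrier[OF C B])
  also have "\<dots> = lam * CR_weight n a mj lam b * v $ (i mod p)"
  proof -
    consider "b < A_blocks n mj" | "A_blocks n mj \<le> b" "b + 1 < N_blocks m n mj"
      | "b = A_blocks n mj + (m - 1)"
      using b m unfolding N_blocks_def by linarith
    then show ?thesis
    proof cases
      case 1
      then show ?thesis by (rule CR_A_row_eigen[OF _ lam m v r])
    next
      case 2
      then show ?thesis by (rule CR_shift_row_eigen[OF _ _ v r])
    next
      case 3
      then show ?thesis using CR_last_row_eigen[OF m C B Rv v r] by simp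
    qed
  qed
  also have "\<dots> = (lam \<cdot>\<^sub>v x) $ i" using i by (simp add: x_def CR_eigvec_def b_def)
  finally show "(CR p m n a mj C B *\<^sub>v x) $ i = (lam \<cdot>\<^sub>v x) $ i" .
qed

theorem theorem3p1:
  fixes p m n :: nat and a :: "nat \<Rightarrow> complex" and mj :: "nat \<Rightarrow> nat"
    and C :: "nat \<Rightarrow> complex mat" and B :: "nat \<Rightarrow> nat \<Rightarrow> complex mat"
    and lam0 :: complex
  assumes "p \<ge> 1" and "m \<ge> 1" and "n \<ge> 1"
    and "inj_on a {1..n}"
    and "\<forall>j\<in>{1..n}. mj j \<ge> 1"
    and "\<forall>i<m. C i \<in> carrier_mat p p"
    and "\<forall>j\<in>{1..n}. \<forall>k\<in>{1..mj j}. B j k \<in> carrier_mat p p"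
    and "R_eigenvalue p m n a mj C B lam0"
  shows "eigenvalue (CR p m n a mj C B) lam0"
proof -
  obtain v where v: "v \<in> carrier_vec p" "v \<noteq> 0\<^sub>v p"
    and Rv: "R_mat p m n a mj C B lam0 *\<^sub>v v = 0\<^sub>v p" and lam: "lam0 \<notin> a ` {1..n}"
    using assms(8) unfolding R_eigenvalue_def by blast
  let ?x = "CR_eigvec p m n a mj lam0 v"
  have "?x \<in> carrier_vec (dim_row (CR p m n a mj C B))"
    by (simp add: CR_eigvec_def CR_def Let_def)
  moreover have "?x \<noteq> 0\<^sub>v (dim_row (CR p m n a mj C B))"
    using CR_eigvec_nonzero[OF assms(2) v] by (simp add: CR_def Let_def)
  moreover have "CR p m n a mj C B *\<^sub>v ?x = lam0 \<cdot>\<^sub>v ?x"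
    using assms(1) by (intro CR_mult_eigvec[OF _ assms(2,6,7) lam Rv v(1)]) simp
  ultimately show ?thesis unfolding eigenvalue_def eigenvector_def by blast
qed

end
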